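(* Let $D=\mathrm{diag}(d_1,\dots,d_n)\in\mathbb{D}^n_+$, $W\in\mathbb{R}^{n\times n}$, $u\in\mathbb{R}^n$, $A:=W-D$ with rows $A_i^\top$, and $\mathcal X=\{x\in\mathbb{R}^n: Dx\in[0,1]^n\}$. For $\tau>0$ let $F_\tau(x)=-Dx+[Dx+\tau(Ax+u)]_0^1$, and define $F_\infty:\mathcal X\to\mathbb{R}^n$ componentwise by $$(F_\infty(x))_i=\begin{cases}-d_ix_i, & A_i^\top x+u_i<0,\\ 0, & A_i^\top x+u_i=0,\\ 1-d_ix_i, & A_i^\top x+u_i>0.\end{cases}$$ Then: (i) for each $x\in\mathcal X$, $\lim_{\tau\to+\infty}F_\tau(x)=F_\infty(x)$; (ii) if $\det A\neq0$, then the Filippov regularization of $F_\infty$ satisfies $\operatorname{F}[F_\infty](x)=-Dx+\mathcal H(Ax+u)$ for every $x\in\mathcal X$.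
   Context: $\mathbb{D}^n_+$ is the set of positive diagonal matrices; $[z]_0^1=\max(0,\min(z,1))$ elementwise. The map $h:\mathbb{R}\to 2^{[0,1]}$ is $h(z)=\{0\}$ if $z<0$, $[0,1]$ if $z=0$, $\{1\}$ if $z>0$, and $\mathcal H(x)=h(x_1)\times\cdots\times h(x_n)\subseteq[0,1]^n$. The Filippov regularization of a vector field $X$ is $\operatorname{F}[X](x)=\bigcap_{\delta>0}\bigcap_{\mu(S)=0}\overline{\mathrm{co}}\{X(B(x,\delta)\setminus S)\}$, where $\mu$ is Lebesgue measure, $B(x,\delta)$ the open ball, and $\overline{\mathrm{co}}$ the closed convex hull. *)

theory Defs
  imports "HOL-Analysis.Analysis"
begin

definition diag_mat :: "real^'n \<Rightarrow> real^'n^'n" where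
  "diag_mat d = (\<chi> i j. if i = j then d $ i else 0)"

definition clip01 :: "real^'n \<Rightarrow> real^'n" where
  "clip01 z = (\<chi> i. max 0 (min (z $ i) 1))"

definition hset :: "real \<Rightarrow> real set" where
  "hset z = (if z < 0 then {0} else if z = 0 then {0..1} else {1})"

definition Hset :: "real^'n \<Rightarrow> (real^'n) set" where
  "Hset x = {v. \<forall>i. v $ i \<in> hset (x $ i)}"

definition filippov :: "(real^'n \<Rightarrow> real^'n) \<Rightarrow> real^'n \<Rightarrow> (real^'n) set" where
  "filippov X x = (\<Inter>\<delta>\<in>{\<delta>. \<delta> > 0}. \<Inter>S\<in>{S. S \<in> null_sets lebesgue}.
      closure (convex hull (X ` (ball x \<delta> - S))))"

definition dom_X :: "real^'n \<Rightarrow> (real^'n) set" where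
  "dom_X d = {x. \<forall>i. 0 \<le> (diag_mat d *v x) $ i \<and> (diag_mat d *v x) $ i \<le> 1}"

definition F_tau :: "real^'n \<Rightarrow> real^'n^'n \<Rightarrow> real^'n \<Rightarrow> real \<Rightarrow> real^'n \<Rightarrow> real^'n" where
  "F_tau d W u \<tau> x = - (diag_mat d *v x)
     + clip01 (diag_mat d *v x + \<tau> *\<^sub>R ((W - diag_mat d) *v x + u))"

text \<open>F_infinity, given by the componentwise formula (stated on all of R^n;
  the theorem only evaluates it / its Filippov regularization at points of \<X>).\<close>
definition F_inf :: "real^'n \<Rightarrow> real^'n^'n \<Rightarrow> real^'n \<Rightarrow> real^'n \<Rightarrow> real^'n" where
  "F_inf d W u x = (\<chi> i. let s = ((W - diag_mat d) *v x + u) $ i in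
      if s < 0 then - (d $ i * x $ i) else if s = 0 then 0 else 1 - d $ i * x $ i)"

end

theory Submission
  imports Defs
begin

text \<open>
  Everything is componentwise. With \<open>a = d\<^sub>i x\<^sub>i \<in> [0,1]\<close> and \<open>\<sigma> = (A x + u)\<^sub>i\<close>,
  the clipped quantity \<open>[a + \<tau> \<sigma>]\<^sub>0\<^sup>1\<close> is eventually \<open>0\<close>, \<open>a\<close> or \<open>1\<close>
  according to the sign of \<open>\<sigma>\<close>, which gives (i).

  For (ii), \<open>-D x + \<H>(A x + u)\<close> is a box. Near \<open>x\<close> the strict signs of \<open>A x + u\<close>
  persist, so \<open>F\<^sub>\<infinity>\<close> stays within \<open>\<epsilon>\<close> of that box (the value \<open>0\<close> taken on
  switching surfaces is covered because \<open>D x \<in> [0,1]\<^sup>n\<close>); boxes being closed and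
  convex, the Filippov set lies in the box. Conversely, every vertex \<open>-D x + e\<close>,
  \<open>e \<in> {0,1}\<^sup>n\<close>, is attained: since \<open>A\<close> is invertible, \<open>x\<close> lies in the closure of
  the open region where \<open>A y + u\<close> has the sign pattern \<open>e\<close>; there \<open>F\<^sub>\<infinity> y = -D y + e\<close>
  is continuous, and removing a null set from an open set does not change its closure.
\<close>

lemma diag_mat_mult_nth: "(diag_mat d *v y) $ i = d $ i * y $ i"
  unfolding diag_mat_def matrix_vector_mult_def
  by (simp add: if_distrib[of "\<lambda>c. c * _"] cong: if_cong)

definition F_inf_scalar :: "real \<Rightarrow> real \<Rightarrow> real" where
  "F_inf_scalar \<sigma> a = (if \<sigma> < 0 then - a else if \<sigma> = 0 then 0 else 1 - a)"

lemma F_inf_nth: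
  "F_inf d W u y $ i = F_inf_scalar (((W - diag_mat d) *v y + u) $ i) (d $ i * y $ i)"
  by (simp add: F_inf_def F_inf_scalar_def Let_def)

lemma F_tau_nth:
  "F_tau d W u \<tau> y $ i
     = - (d $ i * y $ i) + max 0 (min (d $ i * y $ i + \<tau> * ((W - diag_mat d) *v y + u) $ i) 1)"
  by (simp add: F_tau_def clip01_def diag_mat_mult_nth)

lemma tendsto_clip_F_inf_scalar:
  fixes a \<sigma> :: real
  assumes "0 \<le> a" "a \<le> 1"
  shows "((\<lambda>\<tau>. - a + max 0 (min (a + \<tau> * \<sigma>) 1)) \<longlongrightarrow> F_inf_scalar \<sigma> a) at_top"
proof (rule tendsto_eventually)
  consider "\<sigma> < 0" | "\<sigma> = 0" | "\<sigma> > 0" by linarith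
  then show "\<forall>\<^sub>F \<tau> in at_top. - a + max 0 (min (a + \<tau> * \<sigma>) 1) = F_inf_scalar \<sigma> a"
  proof cases
    case 1
    have "a + \<tau> * \<sigma> \<le> 0" if "\<tau> \<ge> a / - \<sigma>" for \<tau>
      using mult_right_mono_neg[OF that, of \<sigma>] 1 by (simp add: field_simps)
    then have "\<forall>\<^sub>F \<tau> in at_top. a + \<tau> * \<sigma> \<le> 0"
      by (rule eventually_at_top_linorderI)
    then show ?thesis
      by eventually_elim (use 1 in \<open>simp add: F_inf_scalar_def\<close>)
  next
    case 2
    then show ?thesis using assms by (simp add: F_inf_scalar_def)
  next
    case 3
    have "a + \<tau> * \<sigma> \<ge> 1" if "\<tau> \<ge> 1 / \<sigma>" for \<tau>
      using mult_right_mono[OF that, of \<sigma>] 3 assms by (simp add: field_simps)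
    then have "\<forall>\<^sub>F \<tau> in at_top. a + \<tau> * \<sigma> \<ge> 1"
      by (rule eventually_at_top_linorderI)
    then show ?thesis
      by eventually_elim (use 3 in \<open>simp add: F_inf_scalar_def\<close>)
  qed
qed

lemma F_tau_tendsto_F_inf:
  assumes "x \<in> dom_X d"
  shows "((\<lambda>\<tau>. F_tau d W u \<tau> x) \<longlongrightarrow> F_inf d W u x) at_top"
proof (rule vec_tendstoI)
  fix i
  have "0 \<le> d $ i * x $ i" "d $ i * x $ i \<le> 1"
    using assms by (auto simp: dom_X_def diag_mat_mult_nth)
  then show "((\<lambda>\<tau>. F_tau d W u \<tau> x $ i) \<longlongrightarrow> F_inf d W u x $ i) at_top"
    unfolding F_tau_nth F_inf_nth by (rule tendsto_clip_F_inf_scalar)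
qed

lemma filippov_subset_closed_convex:
  assumes "closed C" "convex C" "\<forall>\<^sub>F y in nhds x. X y \<in> C"
  shows "filippov X x \<subseteq> C"
proof -
  obtain \<delta> where "\<delta> > 0" and \<delta>: "\<And>y. dist y x < \<delta> \<Longrightarrow> X y \<in> C"
    using assms(3) unfolding eventually_nhds_metric by blast
  have "filippov X x \<subseteq> closure (convex hull (X ` (ball x \<delta> - {})))"
    unfolding filippov_def using \<open>\<delta> > 0\<close> by blast
  also have "\<dots> \<subseteq> C"
    using assms(1,2) \<delta> by (intro closure_minimal hull_minimal) (auto simp: dist_commute)
  finally show ?thesis .
qed

lemma closure_Diff_negligible:
  fixes U :: "'a::euclidean_space set"
  assumes "open U" "negligible S"
  shows "closure (U - S) = closure U"
proof
  show "closure (U - S) \<subseteq> closure U" by (rule closure_mono) blast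
  have "y \<in> closure (U - S)" if "y \<in> U" for y
    unfolding closure_approachable
  proof (intro allI impI)
    fix \<epsilon> :: real assume "\<epsilon> > 0"
    with that have "ball y \<epsilon> \<inter> U \<noteq> {}" by force
    then have "\<not> negligible (ball y \<epsilon> \<inter> U)"
      by (rule open_not_negligible[OF open_Int[OF open_ball \<open>open U\<close>]])
    then have "\<not> ball y \<epsilon> \<inter> U \<subseteq> S"
      using \<open>negligible S\<close> negligible_subset by blast
    then show "\<exists>z\<in>U - S. dist z y < \<epsilon>"
      by (auto simp: dist_commute)
  qed
  then show "closure U \<subseteq> closure (U - S)"
    by (simp add: closure_minimal subsetI)
qed

lemma continuous_value_in_closure_essential_image:
  fixes x :: "'a::euclidean_space"
  assumes "continuous_on UNIV g" "open R" "x \<in> closure R" "\<And>y. y \<in> R \<Longrightarrow> X y = g y"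
    and "\<delta> > 0" "negligible S"
  shows "g x \<in> closure (X ` (ball x \<delta> - S))"
proof -
  have "x \<in> closure (ball x \<delta> \<inter> R)"
    using open_Int_closure_subset[of "ball x \<delta>" R] assms(3,5) by auto
  also have "\<dots> = closure (ball x \<delta> \<inter> R - S)"
    using assms(2,6) by (simp add: closure_Diff_negligible open_Int)
  finally have "g x \<in> g ` closure (ball x \<delta> \<inter> R - S)" by blast
  also have "\<dots> \<subseteq> closure (g ` (ball x \<delta> \<inter> R - S))"
    by (rule image_closure_subset[OF continuous_on_subset[OF assms(1)] closed_closure closure_subset])
      simp
  also have "g ` (ball x \<delta> \<inter> R - S) = X ` (ball x \<delta> \<inter> R - S)"
    using assms(4) by (auto intro: image_cong)
  finally show ?thesis
    using closure_mono[of "X ` (ball x \<delta> \<inter> R - S)" "X ` (ball x \<delta> - S)"] by blast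
qed

lemma convex_hull_subset_filippov:
  fixes X :: "real^'n \<Rightarrow> real^'n"
  assumes "\<And>\<delta> S. \<delta> > 0 \<Longrightarrow> S \<in> null_sets lebesgue \<Longrightarrow> V \<subseteq> closure (X ` (ball x \<delta> - S))"
  shows "convex hull V \<subseteq> filippov X x"
  unfolding filippov_def
proof (intro INT_greatest)
  fix \<delta> :: real and S :: "(real^'n) set" assume "\<delta> \<in> {\<delta>. \<delta> > 0}" "S \<in> {S. S \<in> null_sets lebesgue}"
  then have "V \<subseteq> closure (X ` (ball x \<delta> - S))"
    using assms by simp
  also have "\<dots> \<subseteq> closure (convex hull (X ` (ball x \<delta> - S)))"
    by (intro closure_mono hull_subset)
  finally show "convex hull V \<subseteq> closure (convex hull (X ` (ball x \<delta> - S)))"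
    by (intro hull_minimal convex_closure convex_convex_hull)
qed

lemma cbox_subset_convex_hull_vertices:
  fixes a b :: "'a::euclidean_space"
  shows "cbox a b \<subseteq> convex hull {x. \<forall>k\<in>Basis. x \<bullet> k = a \<bullet> k \<or> x \<bullet> k = b \<bullet> k}"
proof (cases "cbox a b = {}")
  case False
  let ?L = "\<lambda>x. \<Sum>k\<in>Basis. ((b \<bullet> k - a \<bullet> k) * (x \<bullet> k)) *\<^sub>R k"
  have lin: "linear ?L"
    by (rule linear_compose_sum) (auto simp: algebra_simps linearI)
  have "cbox a b = (+) a ` ?L ` (convex hull {x. \<forall>k\<in>Basis. x \<bullet> k = 0 \<or> x \<bullet> k = 1})"
    by (simp add: cbox_image_unit_interval[OF False] unit_interval_convex_hull)
  also have "\<dots> = convex hull ((+) a ` ?L ` {x. \<forall>k\<in>Basis. x \<bullet> k = 0 \<or> x \<bullet> k = 1})"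
    by (simp add: convex_hull_linear_image[OF lin] convex_hull_translation)
  also have "\<dots> \<subseteq> convex hull {x. \<forall>k\<in>Basis. x \<bullet> k = a \<bullet> k \<or> x \<bullet> k = b \<bullet> k}"
    by (rule hull_mono) (auto simp: inner_add_left)
  finally show ?thesis .
qed simp

lemma cbox_subset_convex_hull_vertices_cart:
  fixes a b :: "real^'n"
  shows "cbox a b \<subseteq> convex hull {x. \<forall>i. x $ i = a $ i \<or> x $ i = b $ i}"
  using cbox_subset_convex_hull_vertices[of a b] by (simp add: Basis_vec_def inner_axis)

lemma closed_slab_cart: "closed {v::real^'n. v $ i \<in> {a..b}}"
  by (simp add: Collect_conj_eq closed_Int closed_halfspace_component_le_cart
      closed_halfspace_component_ge_cart)

lemma convex_slab_cart: "convex {v::real^'n. v $ i \<in> {a..b}}"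
proof -
  have "{v::real^'n. v $ i \<in> {a..b}} = {v. \<forall>j. v $ j \<in> (if j = i then {a..b} else UNIV)}"
    by (auto split: if_splits)
  also have "convex \<dots>"
    by (rule convex_box_cart) simp
  finally show ?thesis .
qed

lemma hset_eq_atLeastAtMost: "hset \<sigma> = {if 0 < \<sigma> then 1 else 0 .. if \<sigma> < 0 then 0 else 1}"
  by (simp add: hset_def)

lemma Hset_eq_cbox:
  "Hset z = cbox (\<chi> i. if 0 < z $ i then 1 else 0) (\<chi> i. if z $ i < 0 then 0 else 1)"
  by (simp add: Hset_def hset_eq_atLeastAtMost mem_box_cart set_eq_iff)

lemma Hset_subset_convex_hull_vertices:
  fixes z :: "real^'n"
  shows "Hset z \<subseteq> convex hull {e. \<forall>i. e $ i \<in> hset (z $ i) \<inter> {0, 1}}"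
proof -
  let ?E = "{e. \<forall>i. e $ i = (if 0 < z $ i then 1 else 0) \<or> e $ i = (if z $ i < 0 then 0 else 1)}"
  have "Hset z \<subseteq> convex hull ?E"
    using cbox_subset_convex_hull_vertices_cart[of "\<chi> i. if 0 < z $ i then 1 else 0"
        "\<chi> i. if z $ i < 0 then 0 else 1"]
    by (simp add: Hset_eq_cbox)
  also have "\<dots> \<subseteq> convex hull {e. \<forall>i. e $ i \<in> hset (z $ i) \<inter> {0, 1}}"
  proof (intro hull_mono subsetI CollectI allI)
    fix e :: "real^'n" and i
    assume "e \<in> ?E"
    then have "e $ i = (if 0 < z $ i then 1 else 0) \<or> e $ i = (if z $ i < 0 then 0 else 1)"
      by simp
    then show "e $ i \<in> hset (z $ i) \<inter> {0, 1}"
      by (auto simp: hset_def)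
  qed
  finally show ?thesis .
qed

lemma F_inf_scalar_bounds:
  assumes "0 \<le> a\<^sub>0" "a\<^sub>0 \<le> 1" "\<sigma>\<^sub>0 < 0 \<Longrightarrow> \<sigma> < 0" "0 < \<sigma>\<^sub>0 \<Longrightarrow> 0 < \<sigma>" "\<bar>a - a\<^sub>0\<bar> \<le> \<epsilon>"
  shows "F_inf_scalar \<sigma> a
    \<in> {(if 0 < \<sigma>\<^sub>0 then 1 else 0) - a\<^sub>0 - \<epsilon> .. (if \<sigma>\<^sub>0 < 0 then 0 else 1) - a\<^sub>0 + \<epsilon>}"
  using assms by (auto simp: F_inf_scalar_def)

lemma filippov_F_inf_subset:
  assumes "x \<in> dom_X d"
  shows "filippov (F_inf d W u) x
    \<subseteq> (\<lambda>v. - (diag_mat d *v x) + v) ` Hset ((W - diag_mat d) *v x + u)"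
proof
  fix z assume z: "z \<in> filippov (F_inf d W u) x"
  define s where "s y = (W - diag_mat d) *v y + u" for y
  define lo where "lo i = (if 0 < s x $ i then 1 else 0) - d $ i * x $ i" for i
  define hi where "hi i = (if s x $ i < 0 then 0 else 1) - d $ i * x $ i" for i
  have "z $ i \<in> {lo i - \<epsilon> .. hi i + \<epsilon>}" if "\<epsilon> > 0" for i \<epsilon>
  proof -
    have a: "0 \<le> d $ i * x $ i" "d $ i * x $ i \<le> 1"
      using assms by (auto simp: dom_X_def diag_mat_mult_nth)
    have "isCont (\<lambda>y. s y $ i) x"
      unfolding s_def by (intro continuous_intros)
    then have s_lim: "((\<lambda>y. s y $ i) \<longlongrightarrow> s x $ i) (nhds x)"
      using tendsto_at_iff_tendsto_nhds[of "\<lambda>y. s y $ i" x] by (simp add: isCont_def)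
    have a_lim: "((\<lambda>y. d $ i * y $ i) \<longlongrightarrow> d $ i * x $ i) (nhds x)"
      by (intro tendsto_intros filterlim_ident)
    have "\<forall>\<^sub>F y in nhds x. s x $ i < 0 \<longrightarrow> s y $ i < 0"
      using order_tendstoD(2)[OF s_lim, of 0] by (cases "s x $ i < 0") auto
    moreover have "\<forall>\<^sub>F y in nhds x. 0 < s x $ i \<longrightarrow> 0 < s y $ i"
      using order_tendstoD(1)[OF s_lim, of 0] by (cases "0 < s x $ i") auto
    moreover have "\<forall>\<^sub>F y in nhds x. \<bar>d $ i * y $ i - d $ i * x $ i\<bar> < \<epsilon>"
      using tendstoD[OF a_lim that] by (simp add: dist_real_def)
    ultimately have "\<forall>\<^sub>F y in nhds x. F_inf d W u y \<in> {v. v $ i \<in> {lo i - \<epsilon> .. hi i + \<epsilon>}}"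
    proof eventually_elim
      case (elim y)
      then show ?case
        using F_inf_scalar_bounds[OF a, of "s x $ i" "s y $ i" "d $ i * y $ i" \<epsilon>]
        by (simp add: F_inf_nth lo_def hi_def s_def algebra_simps)
    qed
    then have "filippov (F_inf d W u) x \<subseteq> {v. v $ i \<in> {lo i - \<epsilon> .. hi i + \<epsilon>}}"
      by (intro filippov_subset_closed_convex closed_slab_cart convex_slab_cart)
    with z show ?thesis by blast
  qed
  then have "z $ i \<in> {lo i .. hi i}" for i
    by (auto intro: field_le_epsilon simp: algebra_simps)
  then show "z \<in> (\<lambda>v. - (diag_mat d *v x) + v) ` Hset ((W - diag_mat d) *v x + u)"
    unfolding Hset_eq_cbox cbox_translation[symmetric]
    by (simp add: mem_box_cart lo_def hi_def s_def diag_mat_mult_nth)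
qed

definition sign_region :: "real^'n^'n \<Rightarrow> real^'n \<Rightarrow> real^'n \<Rightarrow> (real^'n) set" where
  "sign_region A u e =
     {y. \<forall>i. (A *v y + u) $ i < 0 \<and> e $ i = 0 \<or> 0 < (A *v y + u) $ i \<and> e $ i = 1}"

lemma open_sign_region: "open (sign_region A u e)"
proof -
  have "sign_region A u e
      = (\<Inter>i. {y. (A *v y + u) $ i < 0 \<and> e $ i = 0 \<or> 0 < (A *v y + u) $ i \<and> e $ i = 1})"
    by (auto simp: sign_region_def)
  then show ?thesis
    by (auto intro!: open_INT open_Collect_disj open_Collect_conj open_Collect_less continuous_intros)
qed

lemma F_inf_on_sign_region:
  assumes "y \<in> sign_region (W - diag_mat d) u e"
  shows "F_inf d W u y = - (diag_mat d *v y) + e"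
proof (rule vec_eq_iff[THEN iffD2, rule_format])
  fix i
  from assms have "((W - diag_mat d) *v y + u) $ i < 0 \<and> e $ i = 0
      \<or> 0 < ((W - diag_mat d) *v y + u) $ i \<and> e $ i = 1"
    by (simp add: sign_region_def)
  then show "F_inf d W u y $ i = (- (diag_mat d *v y) + e) $ i"
    by (auto simp: F_inf_nth F_inf_scalar_def diag_mat_mult_nth)
qed

lemma mem_closure_sign_region:
  fixes A :: "real^'n^'n"
  assumes "invertible A" and e: "\<forall>i. e $ i \<in> hset ((A *v x + u) $ i) \<inter> {0, 1}"
  shows "x \<in> closure (sign_region A u e)"
proof -
  define w where "w = (\<chi> i. if (A *v x + u) $ i = 0 then 2 * e $ i - 1 else 0)"
  obtain B where "A ** B = mat 1"
    using assms(1) invertible_right_inverse by blast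
  then have Aw: "A *v (B *v w) = w"
    by (simp add: matrix_vector_mul_assoc)
  have "x + t *\<^sub>R (B *v w) \<in> sign_region A u e" if "t > 0" for t
  proof -
    have shift: "A *v (x + t *\<^sub>R (B *v w)) + u = (A *v x + u) + t *\<^sub>R w"
      by (simp add: matrix_vector_right_distrib matrix_vector_mult_scaleR Aw)
    have "(A *v x + u) $ i + t * w $ i < 0 \<and> e $ i = 0
        \<or> 0 < (A *v x + u) $ i + t * w $ i \<and> e $ i = 1" for i
      using e[rule_format, of i] \<open>t > 0\<close> by (auto simp: w_def hset_def split: if_splits)
    then show ?thesis
      unfolding sign_region_def mem_Collect_eq shift by simp
  qed
  then have "\<forall>\<^sub>F t in at_right 0. x + t *\<^sub>R (B *v w) \<in> closure (sign_region A u e)"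
    using eventually_at_right_less closure_subset by (blast intro: eventually_mono)
  moreover have "((\<lambda>t. x + t *\<^sub>R (B *v w)) \<longlongrightarrow> x) (at_right 0)"
    by (auto intro!: tendsto_eq_intros)
  ultimately show ?thesis
    by (rule Lim_in_closed_set[OF closed_closure _ trivial_limit_at_right_real])
qed

lemma translated_Hset_subset_filippov_F_inf:
  fixes d u x :: "real^'n" and W :: "real^'n^'n"
  assumes "invertible (W - diag_mat d)"
  shows "(\<lambda>v. - (diag_mat d *v x) + v) ` Hset ((W - diag_mat d) *v x + u)
    \<subseteq> filippov (F_inf d W u) x"
proof -
  let ?V = "{e. \<forall>i. e $ i \<in> hset (((W - diag_mat d) *v x + u) $ i) \<inter> {0, 1}}"
  have "(\<lambda>v. - (diag_mat d *v x) + v) ` Hset ((W - diag_mat d) *v x + u)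
      \<subseteq> (\<lambda>v. - (diag_mat d *v x) + v) ` (convex hull ?V)"
    by (intro image_mono Hset_subset_convex_hull_vertices)
  also have "\<dots> = convex hull ((\<lambda>v. - (diag_mat d *v x) + v) ` ?V)"
    by (rule convex_hull_translation[symmetric])
  also have "\<dots> \<subseteq> filippov (F_inf d W u) x"
  proof (rule convex_hull_subset_filippov, rule image_subsetI)
    fix \<delta> :: real and S :: "(real^'n) set" and e :: "real^'n"
    assume "\<delta> > 0" "S \<in> null_sets lebesgue" "e \<in> ?V"
    then show "- (diag_mat d *v x) + e \<in> closure (F_inf d W u ` (ball x \<delta> - S))"
      using continuous_value_in_closure_essential_image[of "\<lambda>y. - (diag_mat d *v y) + e"
          "sign_region (W - diag_mat d) u e" x "F_inf d W u" \<delta> S]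
      by (simp add: continuous_intros open_sign_region mem_closure_sign_region[OF assms]
          F_inf_on_sign_region negligible_iff_null_sets)
  qed
  finally show ?thesis .
qed

theorem proposition5:
  fixes d u :: "real^'n" and W :: "real^'n^'n"
  assumes "\<forall>i. d $ i > 0"
  shows "(\<forall>x \<in> dom_X d. ((\<lambda>\<tau>. F_tau d W u \<tau> x) \<longlongrightarrow> F_inf d W u x) at_top)
       \<and> (det (W - diag_mat d) \<noteq> 0 \<longrightarrow>
            (\<forall>x \<in> dom_X d. filippov (F_inf d W u) x
               = (\<lambda>v. - (diag_mat d *v x) + v) ` Hset ((W - diag_mat d) *v x + u)))"
proof (intro conjI impI ballI)
  fix x assume "x \<in> dom_X d"
  then show "((\<lambda>\<tau>. F_tau d W u \<tau> x) \<longlongrightarrow> F_inf d W u x) at_top"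
    by (rule F_tau_tendsto_F_inf)
next
  fix x assume "x \<in> dom_X d" and "det (W - diag_mat d) \<noteq> 0"
  then show "filippov (F_inf d W u) x
      = (\<lambda>v. - (diag_mat d *v x) + v) ` Hset ((W - diag_mat d) *v x + u)"
    by (intro subset_antisym filippov_F_inf_subset translated_Hset_subset_filippov_F_inf)
      (simp_all add: invertible_det_nz)
qed

end
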